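(* Let $k\ge 2$ and $n_0=2^{k+1}-1$. Let $T(n)=(3n+1)/2^{v_2(3n+1)}$ be the Syracuse map, $n_i=T^i(n_0)$ and $v_i=v_2(3n_{i-1}+1)$. Then $v_1=\cdots=v_k=1$, $n_k=2\cdot 3^k-1$, and $$v_{k+1}=\begin{cases}2 & \text{if } k \text{ is even},\\ 3+v_2(k+1) & \text{if } k \text{ is odd}.\end{cases}$$ In particular $v_{k+1}\ge 2$ always, and $v_{k+1}\ge 4$ whenever $k$ is odd.
   Context: $v_2$ is the $2$-adic valuation; $T^i$ the $i$-th iterate. *)

theory Defs
  imports "HOL-Computational_Algebra.Primes"
begin

abbreviation v2 :: "nat \<Rightarrow> nat" where
  "v2 m \<equiv> multiplicity (2::nat) m"

definition syracuse :: "nat \<Rightarrow> nat" where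
  "syracuse n = (3 * n + 1) div 2 ^ v2 (3 * n + 1)"

end

theory Submission
  imports Defs
begin

text \<open>
  Each iterate before step k has the form 2^(j+1) 3^i - 1 with j > 0, and
  3 (2^(j+1) 3^i - 1) + 1 = 2 (2^j 3^(i+1) - 1) with an odd second factor: a Syracuse step
  divides by 2 exactly once and trades a factor 2 for a factor 3, so that
  T^i(2^(k+1) - 1) = 2^(k+1-i) 3^i - 1. At i = k the same identity gives
  3 n_k + 1 = 2 (3^(k+1) - 1), and lifting the exponent yields v_2(3^m - 1) = 1 for odd m and
  v_2(m) + 2 for even m, by induction along 3^(2l) - 1 = (3^l - 1)(3^l + 1), using that
  3^l is 1 or 3 modulo 8.
\<close>

lemma v2_eqI:
  fixes x b :: nat
  assumes "x = 2 ^ j * b" and "odd b"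
  shows "v2 x = j"
  using assms by (intro multiplicity_decomposeI) auto

lemma three_power_mod_eight: "(3::nat) ^ m mod 8 = (if even m then 1 else 3)"
proof (induction m)
  case (Suc m)
  have "(3::nat) ^ Suc m mod 8 = 3 * (3 ^ m mod 8) mod 8"
    by (simp add: mod_mult_right_eq)
  with Suc.IH show ?case by simp
qed simp

lemma three_power_eq_eight_mult_plus:
  obtains q :: nat where "(3::nat) ^ m = 8 * q + (if even m then 1 else 3)"
proof (rule that)
  show "(3::nat) ^ m = 8 * (3 ^ m div 8) + (if even m then 1 else 3)"
    using mult_div_mod_eq[of 8 "3 ^ m :: nat"] by (simp only: three_power_mod_eight)
qed

lemma v2_three_power_plus_one: "v2 (3 ^ m + 1) = (if even m then 1 else 2)"
proof -
  obtain q where q: "(3::nat) ^ m = 8 * q + (if even m then 1 else 3)"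
    by (rule three_power_eq_eight_mult_plus)
  show ?thesis
  proof (cases "even m")
    case True
    then have "v2 (3 ^ m + 1) = 1"
      by (intro v2_eqI[where b = "4 * q + 1"]) (simp_all add: q)
    with True show ?thesis
      by simp
  next
    case False
    then have "v2 (3 ^ m + 1) = 2"
      by (intro v2_eqI[where b = "2 * q + 1"]) (simp_all add: q)
    with False show ?thesis
      by simp
  qed
qed

lemma v2_three_power_minus_one_odd:
  assumes "odd m"
  shows "v2 (3 ^ m - 1) = 1"
proof -
  obtain q where q: "(3::nat) ^ m = 8 * q + (if even m then 1 else 3)"
    by (rule three_power_eq_eight_mult_plus)
  show ?thesis
    using assms by (intro v2_eqI[where b = "4 * q + 1"]) (simp_all add: q)
qed

lemma three_power_double_minus_one:
  "(3::nat) ^ (2 * l) - 1 = (3 ^ l - 1) * (3 ^ l + 1)"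
proof -
  obtain a where a: "3 ^ l = Suc a"
    using not0_implies_Suc[of "3 ^ l"] by auto
  have "(3::nat) ^ (2 * l) = 3 ^ l * 3 ^ l"
    by (simp add: mult_2 power_add)
  then show ?thesis
    by (simp add: a algebra_simps)
qed

lemma v2_three_power_minus_one:
  assumes "m > 0"
  shows "v2 (3 ^ m - 1) = (if odd m then 1 else v2 m + 2)"
  using assms
proof (induction m rule: less_induct)
  case (less m)
  show ?case
  proof (cases "odd m")
    case True
    with v2_three_power_minus_one_odd[OF True] show ?thesis by simp
  next
    case False
    then obtain l where m: "m = 2 * l" and "l > 0"
      using less.prems by (auto elim: evenE)
    have "(3::nat) ^ l > 1"
      using one_less_power[of "3::nat" l] \<open>l > 0\<close> by simp
    then have "v2 (3 ^ m - 1) = v2 (3 ^ l - 1) + v2 (3 ^ l + 1)"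
      unfolding m three_power_double_minus_one
      by (intro prime_elem_multiplicity_mult_distrib) auto
    also have "\<dots> = v2 l + 3"
    proof (cases "odd l")
      case True
      then have "v2 l = 0"
        by (simp add: not_dvd_imp_multiplicity_0)
      with True v2_three_power_minus_one_odd[OF True] v2_three_power_plus_one[of l]
      show ?thesis
        by simp
    next
      case False
      with less.IH[of l] \<open>l > 0\<close> v2_three_power_plus_one[of l] show ?thesis
        by (simp add: m)
    qed
    also have "v2 l + 3 = v2 m + 2"
      using \<open>l > 0\<close> by (simp add: m multiplicity_times_same)
    finally show ?thesis
      using False by simp
  qed
qed

lemma syracuse_eqI:
  assumes "3 * n + 1 = 2 ^ j * m" and "odd m"
  shows "syracuse n = m"
  using assms v2_eqI by (simp add: syracuse_def)

lemma three_mult_two_power_three_power_plus_one: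
  "3 * (2 ^ (j + 1) * 3 ^ i - 1) + 1 = 2 * (2 ^ j * 3 ^ (i + 1) - 1 :: nat)"
proof -
  define p :: nat where "p = 2 ^ j * 3 ^ i"
  have "p \<ge> 1"
    by (simp add: p_def)
  moreover have "2 ^ (j + 1) * 3 ^ i = 2 * p" and "2 ^ j * 3 ^ (i + 1) = 3 * p"
    by (simp_all add: p_def)
  ultimately show ?thesis
    by simp
qed

lemma syracuse_two_power_three_power:
  assumes "j > 0"
  shows "v2 (3 * (2 ^ (j + 1) * 3 ^ i - 1) + 1) = 1"
    and "syracuse (2 ^ (j + 1) * 3 ^ i - 1) = 2 ^ j * 3 ^ (i + 1) - 1"
proof -
  have eq: "3 * (2 ^ (j + 1) * 3 ^ i - 1) + 1 = 2 ^ 1 * (2 ^ j * 3 ^ (i + 1) - 1 :: nat)"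
    using three_mult_two_power_three_power_plus_one by simp
  have odd: "odd (2 ^ j * 3 ^ (i + 1) - 1 :: nat)"
    using assms by simp
  from eq odd show "v2 (3 * (2 ^ (j + 1) * 3 ^ i - 1) + 1) = 1"
    by (rule v2_eqI)
  from eq odd show "syracuse (2 ^ (j + 1) * 3 ^ i - 1) = 2 ^ j * 3 ^ (i + 1) - 1"
    by (rule syracuse_eqI)
qed

lemma syracuse_iterate_mersenne:
  assumes "i \<le> k"
  shows "(syracuse ^^ i) (2 ^ (k + 1) - 1) = 2 ^ (k + 1 - i) * 3 ^ i - 1"
  using assms
proof (induction i)
  case (Suc i)
  then have "k + 1 - i = (k - i) + 1" and "k - i > 0"
    by auto
  with Suc show ?case
    using syracuse_two_power_three_power(2)[of "k - i" i] by simp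
qed simp

lemma v2_three_mult_two_mult_three_power_minus_one_plus_one:
  "v2 (3 * (2 * 3 ^ k - 1) + 1) = (if even k then 2 else v2 (k + 1) + 3)"
proof -
  have "(3::nat) ^ (k + 1) - 1 \<noteq> 0"
    using one_less_power[of "3::nat" "k + 1"] by simp
  then have "v2 (2 * (3 ^ (k + 1) - 1)) = v2 (3 ^ (k + 1) - 1) + 1"
    by (simp add: multiplicity_times_same)
  moreover have "3 * (2 * 3 ^ k - 1) + 1 = 2 * (3 ^ (k + 1) - 1 :: nat)"
    using three_mult_two_power_three_power_plus_one[of 0 k] by simp
  ultimately show ?thesis
    using v2_three_power_minus_one[of "k + 1"] by simp
qed

theorem mainTheorem15:
  fixes k :: nat
  assumes "k \<ge> 2"
  defines "n0 \<equiv> 2 ^ (k + 1) - 1"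
  shows "(\<forall>i\<in>{1..k}. v2 (3 * (syracuse ^^ (i - 1)) n0 + 1) = 1)
       \<and> (syracuse ^^ k) n0 = 2 * 3 ^ k - 1
       \<and> v2 (3 * (syracuse ^^ k) n0 + 1) =
           (if even k then 2 else 3 + v2 (k + 1))
       \<and> v2 (3 * (syracuse ^^ k) n0 + 1) \<ge> 2
       \<and> (odd k \<longrightarrow> v2 (3 * (syracuse ^^ k) n0 + 1) \<ge> 4)"
proof -
  have halving_once: "v2 (3 * (syracuse ^^ (i - 1)) n0 + 1) = 1" if "i \<in> {1..k}" for i
  proof -
    from that have "k + 1 - (i - 1) = (k - i + 1) + 1"
      by auto
    then show ?thesis
      using that syracuse_iterate_mersenne[of "i - 1" k]
        syracuse_two_power_three_power(1)[of "k - i + 1"]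
      by (simp add: n0_def)
  qed
  have nk: "(syracuse ^^ k) n0 = 2 * 3 ^ k - 1"
    using syracuse_iterate_mersenne[of k k] by (simp add: n0_def)
  have "odd k \<Longrightarrow> v2 (k + 1) > 0"
    by (simp add: multiplicity_gt_zero_iff)
  with halving_once nk v2_three_mult_two_mult_three_power_minus_one_plus_one[of k] show ?thesis
    by auto
qed

end
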